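(* Fix $N>0$, $\tilde\lambda=(\tilde\lambda_{\dot1},\tilde\lambda_{\dot2})\in\mathbb{C}^2$ and integers $k,l\ge0$. Define on $\mathbb{C}^2\setminus\{0\}$ $$\phi_{k,l}=\frac{k!\,l!}{(k+l)!}\sum_{j=0}^{\min(k,l)}\frac{(k+l-j)!}{j!\,(k-j)!\,(l-j)!}\Big(\frac{N}{\|u\|^2}\Big)^j[u\,\tilde\lambda]^k[\hat u\,\tilde\lambda]^l .$$ Then $\Delta\phi_{k,l}=0$ on $\mathbb{C}^2\setminus\{0\}$, where $\Delta$ is the Laplace–Beltrami operator of the Burns metric $g_N$; moreover $\phi_{k,l}=[u\,\tilde\lambda]^k[\hat u\,\tilde\lambda]^l\,(1+O(\|u\|^{-2}))$ as $\|u\|\to\infty$, and $\phi_{k,l}$ reduces to $[u\,\tilde\lambda]^k[\hat u\,\tilde\lambda]^l$ at $N=0$. Equivalently, with $\chi=\|u\|^2/N$, $\phi_{k,l}=\frac{k!l!}{(k+l)!}\chi^{-l}P^{(k-l,0)}_l(1+2\chi)[u\,\tilde\lambda]^k[\hat u\,\tilde\lambda]^l$ for $k\ge l$ (and symmetrically for $k<l$), $P^{(a,b)}_n$ being Jacobi polynomials.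
   Context: Fix $N>0$. On $\mathbb{C}^2\setminus\{0\}$ with coordinates $u=(u^{\dot1},u^{\dot2})$ write $\|u\|^2=|u^{\dot1}|^2+|u^{\dot2}|^2$ and $\hat u=(-\bar u^{\dot2},\bar u^{\dot1})$. The Burns metric is $g_N=2(|du^{\dot1}|^2+|du^{\dot2}|^2)+2N|u^{\dot2}du^{\dot1}-u^{\dot1}du^{\dot2}|^2/\|u\|^4$; its Laplace–Beltrami operator is explicitly $$\Delta=\frac{2}{1+N/\|u\|^2}\Big(\sum_{a}\frac{\partial^2}{\partial u^{a}\partial\bar u^{a}}+\frac{N}{\|u\|^4}\Big(\sum_a u^a\frac{\partial}{\partial u^a}\Big)\Big(\sum_b\bar u^b\frac{\partial}{\partial\bar u^b}\Big)\Big).$$ For $\tilde\lambda\in\mathbb{C}^2$, $[u\,\tilde\lambda]:=u^{\dot1}\tilde\lambda_{\dot1}+u^{\dot2}\tilde\lambda_{\dot2}$ and $[\hat u\,\tilde\lambda]:=-\bar u^{\dot2}\tilde\lambda_{\dot1}+\bar u^{\dot1}\tilde\lambda_{\dot2}$. *)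

theory Defs
  imports "HOL-Analysis.Analysis"
begin

type_synonym C2 = "complex \<times> complex"

definition nsq :: "C2 \<Rightarrow> real" where
  "nsq u = (cmod (fst u))^2 + (cmod (snd u))^2"

definition brk :: "C2 \<Rightarrow> C2 \<Rightarrow> complex" where
  "brk u lam = fst u * fst lam + snd u * snd lam"

definition hbrk :: "C2 \<Rightarrow> C2 \<Rightarrow> complex" where
  "hbrk u lam = - cnj (snd u) * fst lam + cnj (fst u) * snd lam"

definition dirD :: "(C2 \<Rightarrow> complex) \<Rightarrow> C2 \<Rightarrow> C2 \<Rightarrow> complex" where
  "dirD f v p = vector_derivative (\<lambda>t::real. f (p + t *\<^sub>R v)) (at 0)"

definition W1 :: "(C2 \<Rightarrow> complex) \<Rightarrow> C2 \<Rightarrow> complex" where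
  "W1 f p = (dirD f (1,0) p - \<i> * dirD f (\<i>,0) p) / 2"
definition W1b :: "(C2 \<Rightarrow> complex) \<Rightarrow> C2 \<Rightarrow> complex" where
  "W1b f p = (dirD f (1,0) p + \<i> * dirD f (\<i>,0) p) / 2"
definition W2 :: "(C2 \<Rightarrow> complex) \<Rightarrow> C2 \<Rightarrow> complex" where
  "W2 f p = (dirD f (0,1) p - \<i> * dirD f (0,\<i>) p) / 2"
definition W2b :: "(C2 \<Rightarrow> complex) \<Rightarrow> C2 \<Rightarrow> complex" where
  "W2b f p = (dirD f (0,1) p + \<i> * dirD f (0,\<i>) p) / 2"

definition Eul :: "(C2 \<Rightarrow> complex) \<Rightarrow> C2 \<Rightarrow> complex" where
  "Eul f p = fst p * W1 f p + snd p * W2 f p"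
definition Eulb :: "(C2 \<Rightarrow> complex) \<Rightarrow> C2 \<Rightarrow> complex" where
  "Eulb f p = cnj (fst p) * W1b f p + cnj (snd p) * W2b f p"

text \<open>Laplace--Beltrami operator of the Burns metric g_N (explicit formula).\<close>
definition burns_laplacian :: "real \<Rightarrow> (C2 \<Rightarrow> complex) \<Rightarrow> C2 \<Rightarrow> complex" where
  "burns_laplacian N f p =
     of_real (2 / (1 + N / nsq p)) *
       (W1 (W1b f) p + W2 (W2b f) p + of_real (N / (nsq p)^2) * Eul (Eulb f) p)"

definition phi :: "real \<Rightarrow> C2 \<Rightarrow> nat \<Rightarrow> nat \<Rightarrow> C2 \<Rightarrow> complex" where
  "phi N lam k l u =
     of_real (fact k * fact l / fact (k + l)) *
     (\<Sum>j = 0..min k l. of_real (fact (k + l - j) / (fact j * fact (k - j) * fact (l - j))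
          * (N / nsq u)^j) * brk u lam ^ k * hbrk u lam ^ l)"

definition jacobiP :: "nat \<Rightarrow> nat \<Rightarrow> nat \<Rightarrow> real \<Rightarrow> real" where
  "jacobiP n a b x = (\<Sum>s = 0..n. real ((n + a) choose (n - s)) * real ((n + b) choose s)
                        * ((x - 1) / 2)^s * ((x + 1) / 2)^(n - s))"

end

theory Submission
  imports Defs
begin

text \<open>
  Put \<open>A = [u \<lambda>]\<close> and \<open>B = [\<hat>u \<lambda>]\<close>: both are linear in \<open>u\<close>, \<open>A\<close> holomorphic and \<open>B\<close>
  antiholomorphic. With the monomials \<open>U j = \<parallel>u\<parallel>^(-2j) A^k B^l\<close> one has
  \<open>\<phi>\<^sub>k\<^sub>l = \<Sum>\<^sub>j c\<^sub>j N^j U j\<close>. A Wirtinger computation shows that the flat Laplacian lowers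
  the weight, \<open>\<Sum>\<^sub>a \<partial>\<^sub>a \<partial>\<^sub>a\<^sup>* U j = -j(k+l+1-j) U (j+1)\<close>, while the Euler operators act
  diagonally, \<open>E E\<^sup>* U j = (k-j)(l-j) U j\<close>. So \<open>\<Delta>\<phi>\<^sub>k\<^sub>l\<close> is a multiple of
  \<open>\<Sum>\<^sub>j (c\<^sub>j (k-j)(l-j) - c\<^sub>j\<^sub>+\<^sub>1 (j+1)(k+l-j)) N^(j+1) U (j+2)\<close>, and every coefficient
  vanishes by the two-term recursion of the \<open>c\<^sub>j\<close>. The Jacobi form follows from the
  Vandermonde-type identity \<open>\<Sum>\<^sub>j c\<^sub>j y^j = \<Sum>\<^sub>m C(k,m) C(l,m) (1+y)^m\<close>.
\<close>

section \<open>Wirtinger calculus on \<open>\<complex>\<^sup>2\<close>\<close>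

definition has_wirtinger ::
    "(C2 \<Rightarrow> complex) \<Rightarrow> complex \<Rightarrow> complex \<Rightarrow> complex \<Rightarrow> complex \<Rightarrow> C2 \<Rightarrow> bool" where
  "has_wirtinger f a1 b1 a2 b2 p \<longleftrightarrow>
     (f has_derivative (\<lambda>h. a1 * fst h + b1 * cnj (fst h) + a2 * snd h + b2 * cnj (snd h))) (at p)"

lemma has_wirtinger_dirD:
  assumes "has_wirtinger f a1 b1 a2 b2 p"
  shows "dirD f v p = a1 * fst v + b1 * cnj (fst v) + a2 * snd v + b2 * cnj (snd v)"
proof -
  let ?D = "\<lambda>h. a1 * fst h + b1 * cnj (fst h) + a2 * snd h + b2 * cnj (snd h)"
  have "(f has_derivative ?D) (at (p + 0 *\<^sub>R v))"
    using assms by (simp add: has_wirtinger_def)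
  moreover have "((\<lambda>t::real. p + t *\<^sub>R v) has_derivative (\<lambda>t. t *\<^sub>R v)) (at 0)"
    by (auto intro!: derivative_eq_intros)
  ultimately have "((f \<circ> (\<lambda>t::real. p + t *\<^sub>R v)) has_derivative (?D \<circ> (\<lambda>t. t *\<^sub>R v))) (at 0)"
    by (intro diff_chain_at) simp_all
  moreover have "?D \<circ> (\<lambda>t. t *\<^sub>R v) = (\<lambda>t. t *\<^sub>R ?D v)"
    by (rule ext) (simp add: scaleR_conv_of_real algebra_simps)
  ultimately have "((\<lambda>t::real. f (p + t *\<^sub>R v)) has_vector_derivative ?D v) (at 0)"
    by (simp add: has_vector_derivative_def o_def)
  then show ?thesis
    unfolding dirD_def by (rule vector_derivative_at)
qed

lemma has_wirtinger_W:
  assumes "has_wirtinger f a1 b1 a2 b2 p"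
  shows "W1 f p = a1" "W1b f p = b1" "W2 f p = a2" "W2b f p = b2"
  using has_wirtinger_dirD[OF assms] by (simp_all add: W1_def W1b_def W2_def W2b_def algebra_simps)

lemma has_wirtinger_eq:
  "has_wirtinger f a1 b1 a2 b2 p \<Longrightarrow> a1 = a1' \<Longrightarrow> b1 = b1' \<Longrightarrow> a2 = a2' \<Longrightarrow> b2 = b2' \<Longrightarrow>
   has_wirtinger f a1' b1' a2' b2' p"
  by simp

lemma has_wirtinger_transform:
  assumes "has_wirtinger f a1 b1 a2 b2 p" "open S" "p \<in> S" "\<And>x. x \<in> S \<Longrightarrow> f x = g x"
  shows "has_wirtinger g a1 b1 a2 b2 p"
  using assms unfolding has_wirtinger_def by (blast intro: has_derivative_transform_within_open)

lemma has_wirtinger_W_punctured: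
  assumes "has_wirtinger g a1 b1 a2 b2 p" "p \<noteq> 0" "\<And>x. x \<noteq> 0 \<Longrightarrow> f x = g x"
  shows "W1 f p = a1" "W1b f p = b1" "W2 f p = a2" "W2b f p = b2"
proof -
  have "has_wirtinger f a1 b1 a2 b2 p"
    by (rule has_wirtinger_transform[OF assms(1) open_Compl[OF closed_singleton]])
       (use assms(2,3) in auto)
  then show "W1 f p = a1" "W1b f p = b1" "W2 f p = a2" "W2b f p = b2"
    by (fact has_wirtinger_W)+
qed

lemma has_wirtinger_const: "has_wirtinger (\<lambda>x. c) 0 0 0 0 p"
  unfolding has_wirtinger_def by simp

lemma has_wirtinger_fst: "has_wirtinger fst 1 0 0 0 p"
  unfolding has_wirtinger_def
  by (rule has_derivative_eq_rhs[OF has_derivative_fst[OF has_derivative_ident]]) auto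

lemma has_wirtinger_snd: "has_wirtinger snd 0 0 1 0 p"
  unfolding has_wirtinger_def
  by (rule has_derivative_eq_rhs[OF has_derivative_snd[OF has_derivative_ident]]) auto

lemma has_wirtinger_cnj_fst: "has_wirtinger (\<lambda>x. cnj (fst x)) 0 1 0 0 p"
  unfolding has_wirtinger_def
  by (rule has_derivative_eq_rhs[OF has_derivative_cnj[OF has_derivative_fst[OF has_derivative_ident]]]) auto

lemma has_wirtinger_cnj_snd: "has_wirtinger (\<lambda>x. cnj (snd x)) 0 0 0 1 p"
  unfolding has_wirtinger_def
  by (rule has_derivative_eq_rhs[OF has_derivative_cnj[OF has_derivative_snd[OF has_derivative_ident]]]) auto

lemma has_wirtinger_add:
  "has_wirtinger f a1 b1 a2 b2 p \<Longrightarrow> has_wirtinger g c1 d1 c2 d2 p \<Longrightarrow>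
   has_wirtinger (\<lambda>x. f x + g x) (a1 + c1) (b1 + d1) (a2 + c2) (b2 + d2) p"
  unfolding has_wirtinger_def
  by (erule (1) has_derivative_eq_rhs[OF has_derivative_add]) (auto simp: algebra_simps)

lemma has_wirtinger_mult:
  "has_wirtinger f a1 b1 a2 b2 p \<Longrightarrow> has_wirtinger g c1 d1 c2 d2 p \<Longrightarrow>
   has_wirtinger (\<lambda>x. f x * g x) (f p * c1 + g p * a1) (f p * d1 + g p * b1)
     (f p * c2 + g p * a2) (f p * d2 + g p * b2) p"
  unfolding has_wirtinger_def
  by (erule (1) has_derivative_eq_rhs[OF has_derivative_mult]) (auto simp: algebra_simps)

lemma has_wirtinger_cmult:
  "has_wirtinger f a1 b1 a2 b2 p \<Longrightarrow> has_wirtinger (\<lambda>x. c * f x) (c * a1) (c * b1) (c * a2) (c * b2) p"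
  using has_wirtinger_mult[OF has_wirtinger_const] by fastforce

lemma has_wirtinger_power:
  "has_wirtinger f a1 b1 a2 b2 p \<Longrightarrow>
   has_wirtinger (\<lambda>x. f x ^ n) (of_nat n * f p ^ (n - 1) * a1) (of_nat n * f p ^ (n - 1) * b1)
     (of_nat n * f p ^ (n - 1) * a2) (of_nat n * f p ^ (n - 1) * b2) p"
  unfolding has_wirtinger_def
  by (erule has_derivative_eq_rhs[OF has_derivative_power]) (auto simp: algebra_simps)

lemma has_wirtinger_inverse:
  assumes "has_wirtinger f a1 b1 a2 b2 p" "f p \<noteq> 0"
  shows "has_wirtinger (\<lambda>x. inverse (f x)) (- a1 * inverse (f p)^2) (- b1 * inverse (f p)^2)
           (- a2 * inverse (f p)^2) (- b2 * inverse (f p)^2) p"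
  using assms unfolding has_wirtinger_def
  by (erule_tac has_derivative_eq_rhs[OF Deriv.has_derivative_inverse])
     (auto simp: algebra_simps power2_eq_square)

lemma has_wirtinger_sum:
  "(\<And>i. i \<in> I \<Longrightarrow> has_wirtinger (f i) (a1 i) (b1 i) (a2 i) (b2 i) p) \<Longrightarrow>
   has_wirtinger (\<lambda>x. \<Sum>i\<in>I. f i x) (\<Sum>i\<in>I. a1 i) (\<Sum>i\<in>I. b1 i) (\<Sum>i\<in>I. a2 i) (\<Sum>i\<in>I. b2 i) p"
  unfolding has_wirtinger_def
  by (rule has_derivative_eq_rhs, rule has_derivative_sum, blast)
     (simp add: fun_eq_iff sum.distrib sum_distrib_right)

section \<open>The monomials \<open>\<parallel>u\<parallel>\<^sup>-\<^sup>2\<^sup>j [u \<lambda>]\<^sup>m [\<hat>u \<lambda>]\<^sup>n\<close>\<close>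

lemma nsq_pos: "p \<noteq> 0 \<Longrightarrow> nsq p > 0"
  by (cases p) (auto simp: nsq_def zero_prod_def add_pos_nonneg add_nonneg_pos)

lemma of_real_nsq: "complex_of_real (nsq p) = fst p * cnj (fst p) + snd p * cnj (snd p)"
  by (simp add: nsq_def complex_mult_cnj cmod_power2)

lemma has_wirtinger_nsq:
  "has_wirtinger (\<lambda>x. complex_of_real (nsq x)) (cnj (fst p)) (fst p) (cnj (snd p)) (snd p) p"
  unfolding of_real_nsq
  by (rule has_wirtinger_eq[OF has_wirtinger_add[OF has_wirtinger_mult[OF has_wirtinger_fst has_wirtinger_cnj_fst]
        has_wirtinger_mult[OF has_wirtinger_snd has_wirtinger_cnj_snd]]]) simp_all

lemma has_wirtinger_brk: "has_wirtinger (\<lambda>x. brk x lam) (fst lam) 0 (snd lam) 0 p"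
  unfolding brk_def
  by (rule has_wirtinger_eq[OF has_wirtinger_add[OF has_wirtinger_mult[OF has_wirtinger_fst has_wirtinger_const]
        has_wirtinger_mult[OF has_wirtinger_snd has_wirtinger_const]]]) simp_all

lemma has_wirtinger_hbrk: "has_wirtinger (\<lambda>x. hbrk x lam) 0 (snd lam) 0 (- fst lam) p"
proof -
  have hbrk: "(\<lambda>x. hbrk x lam) = (\<lambda>x. (- fst lam) * cnj (snd x) + snd lam * cnj (fst x))"
    by (simp add: fun_eq_iff hbrk_def)
  show ?thesis
    unfolding hbrk
    by (rule has_wirtinger_eq[OF has_wirtinger_add[OF has_wirtinger_mult[OF has_wirtinger_const has_wirtinger_cnj_snd]
        has_wirtinger_mult[OF has_wirtinger_const has_wirtinger_cnj_fst]]]) simp_all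
qed

definition mon :: "C2 \<Rightarrow> nat \<Rightarrow> nat \<Rightarrow> nat \<Rightarrow> C2 \<Rightarrow> complex" where
  "mon lam j m n p = inverse (complex_of_real (nsq p)) ^ j * brk p lam ^ m * hbrk p lam ^ n"

definition mon_d1 :: "C2 \<Rightarrow> nat \<Rightarrow> nat \<Rightarrow> nat \<Rightarrow> C2 \<Rightarrow> complex" where
  "mon_d1 lam j m n p = - of_nat j * cnj (fst p) * mon lam (Suc j) m n p + of_nat m * fst lam * mon lam j (m - 1) n p"

definition mon_d1b :: "C2 \<Rightarrow> nat \<Rightarrow> nat \<Rightarrow> nat \<Rightarrow> C2 \<Rightarrow> complex" where
  "mon_d1b lam j m n p = - of_nat j * fst p * mon lam (Suc j) m n p + of_nat n * snd lam * mon lam j m (n - 1) p"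

definition mon_d2 :: "C2 \<Rightarrow> nat \<Rightarrow> nat \<Rightarrow> nat \<Rightarrow> C2 \<Rightarrow> complex" where
  "mon_d2 lam j m n p = - of_nat j * cnj (snd p) * mon lam (Suc j) m n p + of_nat m * snd lam * mon lam j (m - 1) n p"

definition mon_d2b :: "C2 \<Rightarrow> nat \<Rightarrow> nat \<Rightarrow> nat \<Rightarrow> C2 \<Rightarrow> complex" where
  "mon_d2b lam j m n p = - of_nat j * snd p * mon lam (Suc j) m n p - of_nat n * fst lam * mon lam j m (n - 1) p"

lemma has_wirtinger_mon:
  assumes "p \<noteq> 0"
  shows "has_wirtinger (mon lam j m n) (mon_d1 lam j m n p) (mon_d1b lam j m n p)
           (mon_d2 lam j m n p) (mon_d2b lam j m n p) p"
proof -
  \<comment> \<open>With the inverse norm kept abstract, the four coefficient identities are pure ring algebra.\<close>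
  define q where "q = inverse (complex_of_real (nsq p))"
  have "complex_of_real (nsq p) \<noteq> 0"
    using nsq_pos[OF assms] by simp
  note inv = has_wirtinger_inverse[OF has_wirtinger_nsq this, folded q_def]
  show ?thesis
    unfolding mon_def[abs_def]
    apply (rule has_wirtinger_eq[OF has_wirtinger_mult[OF has_wirtinger_mult[OF has_wirtinger_power[OF inv]
            has_wirtinger_power[OF has_wirtinger_brk]] has_wirtinger_power[OF has_wirtinger_hbrk]]])
    unfolding mon_d1_def mon_d1b_def mon_d2_def mon_d2b_def mon_def q_def[symmetric]
       apply (cases j; cases m; simp add: algebra_simps power2_eq_square)
      apply (cases j; cases n; simp add: algebra_simps power2_eq_square)
     apply (cases j; cases m; simp add: algebra_simps power2_eq_square)
    apply (cases j; cases n; simp add: algebra_simps power2_eq_square)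
    done
qed

lemma nsq_mult_mon_Suc: "p \<noteq> 0 \<Longrightarrow> of_real (nsq p) * mon lam (Suc j) m n p = mon lam j m n p"
  using nsq_pos[of p] by (simp add: mon_def field_simps)

lemma brk_mult_mon: "of_nat m * brk p lam * mon lam j (m - 1) n p = of_nat m * mon lam j m n p"
  by (cases m) (simp_all add: mon_def algebra_simps)

lemma hbrk_mult_mon: "of_nat n * hbrk p lam * mon lam j m (n - 1) p = of_nat n * mon lam j m n p"
  by (cases n) (simp_all add: mon_def algebra_simps)

lemma euler_mon:
  assumes "p \<noteq> 0"
  shows "fst p * mon_d1 lam j m n p + snd p * mon_d2 lam j m n p = (of_nat m - of_nat j) * mon lam j m n p"
proof -
  have "fst p * mon_d1 lam j m n p + snd p * mon_d2 lam j m n p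
      = - of_nat j * (of_real (nsq p) * mon lam (Suc j) m n p) + of_nat m * brk p lam * mon lam j (m - 1) n p"
    by (simp add: mon_d1_def mon_d2_def of_real_nsq brk_def algebra_simps)
  also have "\<dots> = (of_nat m - of_nat j) * mon lam j m n p"
    by (simp only: nsq_mult_mon_Suc[OF assms] brk_mult_mon) (simp add: algebra_simps)
  finally show ?thesis .
qed

lemma euler_conj_mon:
  assumes "p \<noteq> 0"
  shows "cnj (fst p) * mon_d1b lam j m n p + cnj (snd p) * mon_d2b lam j m n p
           = (of_nat n - of_nat j) * mon lam j m n p"
proof -
  have "cnj (fst p) * mon_d1b lam j m n p + cnj (snd p) * mon_d2b lam j m n p
      = - of_nat j * (of_real (nsq p) * mon lam (Suc j) m n p) + of_nat n * hbrk p lam * mon lam j m (n - 1) p"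
    by (simp add: mon_d1b_def mon_d2b_def of_real_nsq hbrk_def algebra_simps)
  also have "\<dots> = (of_nat n - of_nat j) * mon lam j m n p"
    by (simp only: nsq_mult_mon_Suc[OF assms] hbrk_mult_mon) (simp add: algebra_simps)
  finally show ?thesis .
qed

definition mon_d1_d1b :: "C2 \<Rightarrow> nat \<Rightarrow> nat \<Rightarrow> nat \<Rightarrow> C2 \<Rightarrow> complex" where
  "mon_d1_d1b lam j m n p = - of_nat j * (fst p * mon_d1 lam (Suc j) m n p + mon lam (Suc j) m n p)
     + of_nat n * snd lam * mon_d1 lam j m (n - 1) p"

definition mon_d2_d2b :: "C2 \<Rightarrow> nat \<Rightarrow> nat \<Rightarrow> nat \<Rightarrow> C2 \<Rightarrow> complex" where
  "mon_d2_d2b lam j m n p = - of_nat j * (snd p * mon_d2 lam (Suc j) m n p + mon lam (Suc j) m n p)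
     - of_nat n * fst lam * mon_d2 lam j m (n - 1) p"

lemma has_wirtinger_mon_d1b:
  assumes "p \<noteq> 0"
  shows "has_wirtinger (mon_d1b lam j m n) (mon_d1_d1b lam j m n p)
     (- of_nat j * (fst p * mon_d1b lam (Suc j) m n p) + of_nat n * snd lam * mon_d1b lam j m (n - 1) p)
     (- of_nat j * (fst p * mon_d2 lam (Suc j) m n p) + of_nat n * snd lam * mon_d2 lam j m (n - 1) p)
     (- of_nat j * (fst p * mon_d2b lam (Suc j) m n p) + of_nat n * snd lam * mon_d2b lam j m (n - 1) p) p"
proof -
  have "mon_d1b lam j m n
      = (\<lambda>x. (- of_nat j) * (fst x * mon lam (Suc j) m n x) + (of_nat n * snd lam) * mon lam j m (n - 1) x)"
    by (simp add: fun_eq_iff mon_d1b_def algebra_simps)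
  then show ?thesis
    by (simp only:)
       (rule has_wirtinger_eq[OF has_wirtinger_add[OF has_wirtinger_cmult[OF has_wirtinger_mult[OF
          has_wirtinger_fst has_wirtinger_mon[OF assms]]] has_wirtinger_cmult[OF has_wirtinger_mon[OF assms]]]],
        simp_all add: mon_d1_d1b_def algebra_simps)
qed

lemma has_wirtinger_mon_d2b:
  assumes "p \<noteq> 0"
  shows "has_wirtinger (mon_d2b lam j m n)
     (- of_nat j * (snd p * mon_d1 lam (Suc j) m n p) - of_nat n * fst lam * mon_d1 lam j m (n - 1) p)
     (- of_nat j * (snd p * mon_d1b lam (Suc j) m n p) - of_nat n * fst lam * mon_d1b lam j m (n - 1) p)
     (mon_d2_d2b lam j m n p)
     (- of_nat j * (snd p * mon_d2b lam (Suc j) m n p) - of_nat n * fst lam * mon_d2b lam j m (n - 1) p) p"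
proof -
  have "mon_d2b lam j m n
      = (\<lambda>x. (- of_nat j) * (snd x * mon lam (Suc j) m n x) + (- (of_nat n * fst lam)) * mon lam j m (n - 1) x)"
    by (simp add: fun_eq_iff mon_d2b_def algebra_simps)
  then show ?thesis
    by (simp only:)
       (rule has_wirtinger_eq[OF has_wirtinger_add[OF has_wirtinger_cmult[OF has_wirtinger_mult[OF
          has_wirtinger_snd has_wirtinger_mon[OF assms]]] has_wirtinger_cmult[OF has_wirtinger_mon[OF assms]]]],
        simp_all add: mon_d2_d2b_def algebra_simps)
qed

lemma flat_laplacian_mon:
  assumes "p \<noteq> 0"
  shows "mon_d1_d1b lam j m n p + mon_d2_d2b lam j m n p
           = - of_nat j * (of_nat m + of_nat n + 1 - of_nat j) * mon lam (Suc j) m n p"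
proof -
  have "mon_d1_d1b lam j m n p + mon_d2_d2b lam j m n p = - of_nat j * (2 * mon lam (Suc j) m n p)
     - of_nat j * (fst p * mon_d1 lam (Suc j) m n p + snd p * mon_d2 lam (Suc j) m n p)
     - of_nat j * (of_nat n * hbrk p lam * mon lam (Suc j) m (n - 1) p)"
    by (simp add: mon_d1_d1b_def mon_d2_d2b_def mon_d1_def mon_d2_def hbrk_def algebra_simps)
  also have "\<dots> = - of_nat j * (of_nat m + of_nat n + 1 - of_nat j) * mon lam (Suc j) m n p"
    by (simp only: euler_mon[OF assms] hbrk_mult_mon) (simp add: algebra_simps)
  finally show ?thesis .
qed

section \<open>The Burns Laplacian of a combination of monomials\<close>

context
  fixes E :: "nat \<Rightarrow> complex" and J :: "nat set" and lam :: C2 and k l :: nat and f :: "C2 \<Rightarrow> complex"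
  defines "f \<equiv> \<lambda>u. \<Sum>j\<in>J. E j * mon lam j k l u"
begin

lemma has_wirtinger_mon_sum:
  assumes "p \<noteq> 0"
  shows "has_wirtinger f (\<Sum>j\<in>J. E j * mon_d1 lam j k l p) (\<Sum>j\<in>J. E j * mon_d1b lam j k l p)
     (\<Sum>j\<in>J. E j * mon_d2 lam j k l p) (\<Sum>j\<in>J. E j * mon_d2b lam j k l p) p"
  unfolding f_def using assms by (intro has_wirtinger_sum has_wirtinger_cmult has_wirtinger_mon)

lemma flat_laplacian_mon_sum:
  assumes "p \<noteq> 0"
  shows "W1 (W1b f) p + W2 (W2b f) p
     = (\<Sum>j\<in>J. E j * (- of_nat j * (of_nat k + of_nat l + 1 - of_nat j)) * mon lam (Suc j) k l p)"
proof -
  have W1b: "W1b f x = (\<Sum>j\<in>J. E j * mon_d1b lam j k l x)"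
    and W2b: "W2b f x = (\<Sum>j\<in>J. E j * mon_d2b lam j k l x)" if "x \<noteq> 0" for x
    using has_wirtinger_W(2,4)[OF has_wirtinger_mon_sum[OF that]] by auto
  have "W1 (W1b f) p = (\<Sum>j\<in>J. E j * mon_d1_d1b lam j k l p)"
    by (rule has_wirtinger_W_punctured(1)[OF _ assms W1b])
       (rule has_wirtinger_sum has_wirtinger_cmult has_wirtinger_mon_d1b[OF assms])+
  moreover have "W2 (W2b f) p = (\<Sum>j\<in>J. E j * mon_d2_d2b lam j k l p)"
    by (rule has_wirtinger_W_punctured(3)[OF _ assms W2b])
       (rule has_wirtinger_sum has_wirtinger_cmult has_wirtinger_mon_d2b[OF assms])+
  ultimately show ?thesis
    by (simp add: flat_laplacian_mon[OF assms] sum.distrib[symmetric] distrib_left[symmetric] mult.assoc)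
qed

lemma euler_euler_conj_mon_sum:
  assumes "p \<noteq> 0"
  shows "Eul (Eulb f) p = (\<Sum>j\<in>J. E j * ((of_nat l - of_nat j) * (of_nat k - of_nat j)) * mon lam j k l p)"
proof -
  let ?g = "\<lambda>x. \<Sum>j\<in>J. E j * (of_nat l - of_nat j) * mon lam j k l x"
  have Eulb: "Eulb f x = ?g x" if "x \<noteq> 0" for x
  proof -
    have "Eulb f x = (\<Sum>j\<in>J. E j * (cnj (fst x) * mon_d1b lam j k l x + cnj (snd x) * mon_d2b lam j k l x))"
      by (simp add: Eulb_def has_wirtinger_W[OF has_wirtinger_mon_sum[OF that]] sum_distrib_left
            sum.distrib algebra_simps)
    also have "\<dots> = ?g x"
      by (simp add: euler_conj_mon[OF that] mult.assoc)
    finally show ?thesis .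
  qed
  have "has_wirtinger ?g (\<Sum>j\<in>J. E j * (of_nat l - of_nat j) * mon_d1 lam j k l p)
     (\<Sum>j\<in>J. E j * (of_nat l - of_nat j) * mon_d1b lam j k l p)
     (\<Sum>j\<in>J. E j * (of_nat l - of_nat j) * mon_d2 lam j k l p)
     (\<Sum>j\<in>J. E j * (of_nat l - of_nat j) * mon_d2b lam j k l p) p"
    using assms by (intro has_wirtinger_sum has_wirtinger_cmult has_wirtinger_mon)
  note W = has_wirtinger_W_punctured[OF this assms Eulb]
  have "Eul (Eulb f) p
      = (\<Sum>j\<in>J. E j * (of_nat l - of_nat j) * (fst p * mon_d1 lam j k l p + snd p * mon_d2 lam j k l p))"
    using W(1,3) unfolding Eul_def by (simp add: sum_distrib_left flip: sum.distrib) (simp add: algebra_simps)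
  then show ?thesis
    by (simp add: euler_mon[OF assms] mult.assoc)
qed

lemma burns_laplacian_mon_sum:
  assumes "p \<noteq> 0"
  shows "burns_laplacian N f p = of_real (2 / (1 + N / nsq p)) *
     ((\<Sum>j\<in>J. E j * (- of_nat j * (of_nat k + of_nat l + 1 - of_nat j)) * mon lam (Suc j) k l p)
      + of_real (N / (nsq p)^2) * (\<Sum>j\<in>J. E j * ((of_nat l - of_nat j) * (of_nat k - of_nat j)) * mon lam j k l p))"
  unfolding burns_laplacian_def flat_laplacian_mon_sum[OF assms, symmetric]
    euler_euler_conj_mon_sum[OF assms, symmetric] by simp

end

section \<open>The coefficients of \<open>\<phi>\<^sub>k\<^sub>,\<^sub>l\<close>\<close>

definition phi_coeff :: "nat \<Rightarrow> nat \<Rightarrow> nat \<Rightarrow> real" where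
  "phi_coeff k l j = fact (k + l - j) / (fact j * fact (k - j) * fact (l - j))"

definition phi_poly :: "nat \<Rightarrow> nat \<Rightarrow> real \<Rightarrow> real" where
  "phi_poly k l x = (\<Sum>j = 0..min k l. phi_coeff k l j * x ^ j)"

lemma phi_coeff_Suc:
  assumes "i < k" "i < l"
  shows "phi_coeff k l (Suc i) * real (Suc i) * (real k + real l - real i)
           = phi_coeff k l i * (real l - real i) * (real k - real i)"
proof -
  obtain a b where k: "k = Suc (i + a)" and l: "l = Suc (i + b)"
    using assms by (metis less_imp_Suc_add)
  define n where "n = i + a + b"
  have nat_diffs: "k + l - Suc i = Suc n" "k + l - i = Suc (Suc n)"
    "k - Suc i = a" "l - Suc i = b" "k - i = Suc a" "l - i = Suc b"
    using k l by (simp_all add: n_def)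
  have real_diffs: "real k + real l - real i = real (Suc (Suc n))"
    "real l - real i = real (Suc b)" "real k - real i = real (Suc a)"
    using k l by (simp_all add: n_def)
  have "(fact i :: real) \<noteq> 0" "(fact a :: real) \<noteq> 0" "(fact b :: real) \<noteq> 0"
    by simp_all
  then show ?thesis
    unfolding phi_coeff_def nat_diffs real_diffs fact_Suc
    by (simp add: divide_simps del: of_nat_Suc)
qed

lemma sum_choose_mult_choose:
  assumes "j \<le> b" "b \<le> a"
  shows "(\<Sum>m\<le>b. (a choose m) * (b choose m) * (m choose j)) = (a choose j) * ((a + b - j) choose (b - j))"
proof -
  have "(\<Sum>m\<le>b. (a choose m) * (b choose m) * (m choose j)) = (\<Sum>m\<in>{j..b}. (a choose m) * (b choose m) * (m choose j))"
    by (rule sum.mono_neutral_right) auto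
  also have "\<dots> = (\<Sum>m\<in>{j..b}. (a choose j) * ((a - j) choose (m - j)) * (b choose m))"
  proof (rule sum.cong[OF refl])
    fix m assume m: "m \<in> {j..b}"
    have "(a choose m) * (m choose j) = (a choose j) * ((a - j) choose (m - j))"
      using m assms by (intro choose_mult) auto
    then show "(a choose m) * (b choose m) * (m choose j) = (a choose j) * ((a - j) choose (m - j)) * (b choose m)"
      by (metis mult.assoc mult.commute)
  qed
  also have "\<dots> = (\<Sum>i\<in>{0..b-j}. (a choose j) * ((a - j) choose i) * (b choose (j + i)))"
    unfolding sum.atLeastAtMost_shift_0[OF assms(1)] o_def by simp
  also have "\<dots> = (a choose j) * (\<Sum>i\<le>b-j. ((a - j) choose i) * (b choose ((b - j) - i)))"
    unfolding sum_distrib_left atLeast0AtMost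
  proof (rule sum.cong[OF refl])
    fix i assume "i \<in> {..b-j}"
    then have "b choose (j + i) = b choose (b - j - i)"
      using assms binomial_symmetric[of "j + i" b] by (simp add: diff_diff_add)
    then show "(a choose j) * ((a - j) choose i) * (b choose (j + i))
        = (a choose j) * (((a - j) choose i) * (b choose (b - j - i)))"
      by (simp only: mult.assoc)
  qed
  also have "\<dots> = (a choose j) * ((a - j + b) choose (b - j))" by (simp only: vandermonde)
  also have "a - j + b = a + b - j" using assms by simp
  finally show ?thesis .
qed

lemma phi_coeff_eq_choose:
  assumes "j \<le> b" "b \<le> a"
  shows "phi_coeff a b j = real ((a choose j) * ((a + b - j) choose (b - j)))"
proof -
  have "real ((a choose j) * ((a + b - j) choose (b - j)))
      = fact a / (fact j * fact (a - j)) * (fact (a + b - j) / (fact (b - j) * fact (a + b - j - (b - j))))"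
    using assms by (simp add: binomial_fact)
  also have "a + b - j - (b - j) = a" using assms by simp
  finally show ?thesis unfolding phi_coeff_def by (simp add: field_simps)
qed

lemma phi_poly_eq_sum_choose:
  assumes "b \<le> a"
  shows "phi_poly a b y = (\<Sum>m = 0..b. real (a choose m) * real (b choose m) * (1 + y) ^ m)"
proof -
  have "(\<Sum>m\<in>{0..b}. real (a choose m) * real (b choose m) * (1 + y) ^ m)
      = (\<Sum>m\<le>b. real (a choose m) * real (b choose m) * (\<Sum>j\<le>b. real (m choose j) * y ^ j))"
    unfolding atLeast0AtMost
  proof (rule sum.cong[OF refl])
    fix m assume m: "m \<in> {..b}"
    have "(1 + y) ^ m = (y + 1) ^ m" by (metis add.commute)
    also have "\<dots> = (\<Sum>j\<le>m. real (m choose j) * y ^ j)"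
      unfolding binomial_ring[of y 1 m] by simp
    also have "\<dots> = (\<Sum>j\<le>b. real (m choose j) * y ^ j)"
      using m by (intro sum.mono_neutral_left) auto
    finally show "real (a choose m) * real (b choose m) * (1 + y) ^ m
        = real (a choose m) * real (b choose m) * (\<Sum>j\<le>b. real (m choose j) * y ^ j)"
      by simp
  qed
  also have "\<dots> = (\<Sum>m\<le>b. \<Sum>j\<le>b. y ^ j * real ((a choose m) * (b choose m) * (m choose j)))"
    by (simp add: sum_distrib_left mult_ac)
  also have "\<dots> = (\<Sum>j\<le>b. \<Sum>m\<le>b. y ^ j * real ((a choose m) * (b choose m) * (m choose j)))"
    by (rule sum.swap)
  also have "\<dots> = (\<Sum>j\<le>b. y ^ j * real (\<Sum>m\<le>b. (a choose m) * (b choose m) * (m choose j)))"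
    by (simp only: sum_distrib_left of_nat_sum)
  also have "\<dots> = (\<Sum>j\<le>b. phi_coeff a b j * y ^ j)"
    by (rule sum.cong[OF refl]) (use assms in \<open>simp add: sum_choose_mult_choose phi_coeff_eq_choose\<close>)
  finally show ?thesis
    using assms by (simp add: phi_poly_def atLeast0AtMost min_absorb2)
qed

lemma phi_poly_commute: "phi_poly k l = phi_poly l k"
  by (simp add: fun_eq_iff phi_poly_def phi_coeff_def add.commute min.commute mult_ac)

lemma jacobiP_eq_phi_poly:
  assumes "b \<le> a" "x > 0"
  shows "x powi (- int b) * jacobiP b (a - b) 0 (1 + 2 * x) = phi_poly a b (1 / x)"
proof -
  have "x powi (- int b) * jacobiP b (a - b) 0 (1 + 2 * x)
      = (\<Sum>s = 0..b. real (a choose (b - s)) * real (b choose s) * (1 + 1 / x) ^ (b - s))"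
    unfolding jacobiP_def power_int_minus power_int_of_nat sum_distrib_left
  proof (rule sum.cong[OF refl])
    fix s assume s: "s \<in> {0..b}"
    have simps: "b + (a - b) = a" "(1 + 2 * x - 1) / 2 = x" "(1 + 2 * x + 1) / 2 = 1 + x"
      "x ^ b = x ^ s * x ^ (b - s)"
      using assms s by (simp_all flip: power_add)
    have "(1 + 1 / x) ^ (b - s) = (1 + x) ^ (b - s) / x ^ (b - s)"
      using assms by (simp add: field_simps flip: power_divide)
    then show "inverse (x ^ b) * (real ((b + (a - b)) choose (b - s)) * real ((b + 0) choose s) *
          ((1 + 2 * x - 1) / 2) ^ s * ((1 + 2 * x + 1) / 2) ^ (b - s)) =
         real (a choose (b - s)) * real (b choose s) * (1 + 1 / x) ^ (b - s)"
      unfolding simps using assms by (simp add: field_simps)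
  qed
  also have "\<dots> = (\<Sum>s = 0..b. real (a choose s) * real (b choose s) * (1 + 1 / x) ^ s)"
    by (subst sum.atLeastAtMost_rev) (auto intro!: sum.cong simp flip: binomial_symmetric)
  also have "\<dots> = phi_poly a b (1 / x)"
    using phi_poly_eq_sum_choose[OF assms(1)] by simp
  finally show ?thesis .
qed

lemma phi_eq_phi_poly:
  "phi N lam k l u = of_real (fact k * fact l / fact (k + l) * phi_poly k l (N / nsq u))
     * (brk u lam ^ k * hbrk u lam ^ l)"
  by (simp add: phi_def phi_poly_def phi_coeff_def sum_distrib_left sum_distrib_right mult.assoc)

lemma phi_poly_0: "phi_poly k l 0 = fact (k + l) / (fact k * fact l)"
  by (simp add: phi_poly_def phi_coeff_def sum.atLeast_Suc_atMost[of 0])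

lemma phi_N_0: "phi 0 lam k l u = brk u lam ^ k * hbrk u lam ^ l"
  by (simp add: phi_eq_phi_poly phi_poly_0)

lemma phi_poly_sub_0_le:
  assumes "0 \<le> x" "x \<le> 1"
  shows "\<bar>phi_poly k l x - phi_poly k l 0\<bar> \<le> (\<Sum>j = 1..min k l. phi_coeff k l j) * x"
proof -
  have "phi_poly k l x - phi_poly k l 0 = (\<Sum>j = 1..min k l. phi_coeff k l j * x ^ j)"
    by (simp add: phi_poly_def sum.atLeast_Suc_atMost[of 0])
  moreover have "(\<Sum>j = 1..min k l. phi_coeff k l j * x ^ j) \<le> (\<Sum>j = 1..min k l. phi_coeff k l j * x)"
    using assms by (intro sum_mono mult_left_mono) (auto simp: phi_coeff_def intro: power_decreasing[of 1, simplified])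
  ultimately show ?thesis
    using assms by (simp add: sum_distrib_right phi_coeff_def sum_nonneg)
qed

lemma phi_asymptotic:
  assumes "N > 0"
  shows "\<exists>C R. \<forall>u. nsq u \<ge> R \<longrightarrow>
           cmod (phi N lam k l u - brk u lam ^ k * hbrk u lam ^ l)
             \<le> C * cmod (brk u lam ^ k * hbrk u lam ^ l) / nsq u"
proof (intro exI allI impI)
  fix u assume u: "nsq u \<ge> N"
  define X where "X = brk u lam ^ k * hbrk u lam ^ l"
  define K :: real where "K = fact k * fact l / fact (k + l)"
  define S where "S = (\<Sum>j = 1..min k l. phi_coeff k l j)"
  have "K > 0" "nsq u > 0"
    using assms u by (simp_all add: K_def)
  have "phi N lam k l u - X = of_real (K * (phi_poly k l (N / nsq u) - phi_poly k l 0)) * X"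
    by (simp add: phi_eq_phi_poly phi_poly_0 X_def K_def right_diff_distrib left_diff_distrib)
  then have "cmod (phi N lam k l u - X) = K * \<bar>phi_poly k l (N / nsq u) - phi_poly k l 0\<bar> * cmod X"
    using \<open>K > 0\<close> by (simp add: norm_mult abs_mult flip: of_real_diff)
  also have "\<dots> \<le> K * (S * (N / nsq u)) * cmod X"
    using assms u \<open>K > 0\<close> \<open>nsq u > 0\<close> phi_poly_sub_0_le[of "N / nsq u" k l]
    by (intro mult_right_mono mult_left_mono) (simp_all add: S_def)
  finally show "cmod (phi N lam k l u - X) \<le> K * S * N * cmod X / nsq u"
    by simp
qed

lemma phi_eq_jacobiP:
  assumes "N > 0" "u \<noteq> 0" "l \<le> k"
  shows "phi N lam k l u = of_real (fact k * fact l / fact (k + l)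
           * (nsq u / N) powi (- int l) * jacobiP l (k - l) 0 (1 + 2 * (nsq u / N)))
           * brk u lam ^ k * hbrk u lam ^ l"
  using jacobiP_eq_phi_poly[OF assms(3), of "nsq u / N"] nsq_pos[OF assms(2)] assms(1)
  by (simp add: phi_eq_phi_poly mult.assoc)

lemma phi_eq_jacobiP_less:
  assumes "N > 0" "u \<noteq> 0" "k < l"
  shows "phi N lam k l u = of_real (fact k * fact l / fact (k + l)
           * (nsq u / N) powi (- int k) * jacobiP k (l - k) 0 (1 + 2 * (nsq u / N)))
           * brk u lam ^ k * hbrk u lam ^ l"
  using jacobiP_eq_phi_poly[of k l "nsq u / N"] nsq_pos[OF assms(2)] assms(1,3)
  by (simp add: phi_eq_phi_poly phi_poly_commute[of k] mult.assoc)

lemma phi_eq_mon_sum: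
  "phi N lam k l = (\<lambda>u. \<Sum>j = 0..min k l.
     of_real (fact k * fact l / fact (k + l) * phi_coeff k l j * N ^ j) * mon lam j k l u)"
  by (simp add: fun_eq_iff phi_def phi_coeff_def mon_def sum_distrib_left divide_inverse
        power_mult_distrib mult_ac flip: of_real_inverse)

lemma mon_Suc_Suc:
  "of_real (N / (nsq p)^2) * mon lam j m n p = of_real N * mon lam (Suc (Suc j)) m n p"
  by (simp add: mon_def divide_inverse power2_eq_square mult_ac flip: of_real_inverse)

lemma sum_shift_cancel:
  fixes a b :: "nat \<Rightarrow> 'a::semiring_0"
  assumes "a 0 = 0" "b M = 0" "\<And>i. i < M \<Longrightarrow> a (Suc i) + b i = 0"
  shows "(\<Sum>j = 0..M. a j * g (Suc j)) + (\<Sum>j = 0..M. b j * g (Suc (Suc j))) = 0"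
proof (cases M)
  case 0
  then show ?thesis
    using assms(1,2) by simp
next
  case (Suc M')
  have "(\<Sum>j = 0..M. a j * g (Suc j)) = (\<Sum>i = 0..M'. a (Suc i) * g (Suc (Suc i)))"
    using assms(1) Suc by (simp only: sum.atLeast0_atMost_Suc_shift) simp
  moreover have "(\<Sum>j = 0..M. b j * g (Suc (Suc j))) = (\<Sum>i = 0..M'. b i * g (Suc (Suc i)))"
    using assms(2) Suc by (simp only: sum.atLeast0_atMost_Suc) simp
  ultimately have "(\<Sum>j = 0..M. a j * g (Suc j)) + (\<Sum>j = 0..M. b j * g (Suc (Suc j)))
      = (\<Sum>i = 0..M'. (a (Suc i) + b i) * g (Suc (Suc i)))"
    by (simp add: sum.distrib distrib_right)
  also have "\<dots> = 0"
    using assms(3) Suc by (simp add: sum.neutral)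
  finally show ?thesis .
qed

lemma burns_laplacian_phi:
  assumes "p \<noteq> 0"
  shows "burns_laplacian N (phi N lam k l) p = 0"
proof -
  define K :: real where "K = fact k * fact l / fact (k + l)"
  define e where "e j = K * phi_coeff k l j * N ^ j" for j
  define a where "a j = complex_of_real (e j * (- real j * (real k + real l + 1 - real j)))" for j
  define b where "b j = complex_of_real (e j * ((real l - real j) * (real k - real j)) * N)" for j
  have "of_real (N / (nsq p)^2) *
        (\<Sum>j = 0..min k l. of_real (e j) * ((of_nat l - of_nat j) * (of_nat k - of_nat j)) * mon lam j k l p)
      = (\<Sum>j = 0..min k l. b j * mon lam (Suc (Suc j)) k l p)"
    unfolding sum_distrib_left
  proof (rule sum.cong[OF refl])
    fix j
    let ?c = "of_real (e j) * ((of_nat l - of_nat j) * (of_nat k - of_nat j))"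
    have "of_real (N / (nsq p)^2) * (?c * mon lam j k l p) = ?c * (of_real (N / (nsq p)^2) * mon lam j k l p)"
      by (simp only: ac_simps)
    also have "\<dots> = b j * mon lam (Suc (Suc j)) k l p"
      unfolding mon_Suc_Suc by (simp add: b_def mult_ac)
    finally show "of_real (N / (nsq p)^2) * (?c * mon lam j k l p) = b j * mon lam (Suc (Suc j)) k l p" .
  qed
  then have "burns_laplacian N (phi N lam k l) p = of_real (2 / (1 + N / nsq p)) *
     ((\<Sum>j = 0..min k l. a j * mon lam (Suc j) k l p) + (\<Sum>j = 0..min k l. b j * mon lam (Suc (Suc j)) k l p))"
    unfolding phi_eq_mon_sum K_def[symmetric] e_def[symmetric] burns_laplacian_mon_sum[OF assms] by (simp add: a_def)
  also have "(\<Sum>j = 0..min k l. a j * mon lam (Suc j) k l p)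
      + (\<Sum>j = 0..min k l. b j * mon lam (Suc (Suc j)) k l p) = 0"
  proof (rule sum_shift_cancel)
    show "a 0 = 0" "b (min k l) = 0"
      by (auto simp: a_def b_def min_def)
    fix i assume "i < min k l"
    then have rec: "phi_coeff k l (Suc i) * real (Suc i) * (real k + real l - real i)
        = phi_coeff k l i * (real l - real i) * (real k - real i)"
      by (intro phi_coeff_Suc) auto
    have "e (Suc i) * (real (Suc i) * (real k + real l + 1 - real (Suc i)))
        = K * N ^ Suc i * (phi_coeff k l (Suc i) * real (Suc i) * (real k + real l - real i))"
      by (simp add: e_def algebra_simps)
    also have "\<dots> = e i * ((real l - real i) * (real k - real i)) * N"
      unfolding rec by (simp add: e_def algebra_simps)
    finally have "e (Suc i) * (- real (Suc i) * (real k + real l + 1 - real (Suc i)))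
        + e i * ((real l - real i) * (real k - real i)) * N = 0"
      by (simp only: mult_minus_left mult_minus_right)
    then show "a (Suc i) + b i = 0"
      unfolding a_def b_def by (simp only: of_real_add[symmetric] of_real_eq_0_iff)
  qed
  finally show ?thesis
    by simp
qed

theorem mainTheorem5:
  fixes N :: real and lam :: C2 and k l :: nat
  assumes "N > 0"
  shows "(\<forall>u. u \<noteq> 0 \<longrightarrow> burns_laplacian N (phi N lam k l) u = 0)
    \<and> (\<exists>C R. \<forall>u. nsq u \<ge> R \<longrightarrow>
          cmod (phi N lam k l u - brk u lam ^ k * hbrk u lam ^ l)
            \<le> C * cmod (brk u lam ^ k * hbrk u lam ^ l) / nsq u)
    \<and> (\<forall>u. phi 0 lam k l u = brk u lam ^ k * hbrk u lam ^ l)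
    \<and> (\<forall>u. u \<noteq> 0 \<longrightarrow> l \<le> k \<longrightarrow>
          phi N lam k l u = of_real (fact k * fact l / fact (k + l)
             * (nsq u / N) powi (- int l) * jacobiP l (k - l) 0 (1 + 2 * (nsq u / N)))
             * brk u lam ^ k * hbrk u lam ^ l)
    \<and> (\<forall>u. u \<noteq> 0 \<longrightarrow> k < l \<longrightarrow>
          phi N lam k l u = of_real (fact k * fact l / fact (k + l)
             * (nsq u / N) powi (- int k) * jacobiP k (l - k) 0 (1 + 2 * (nsq u / N)))
             * brk u lam ^ k * hbrk u lam ^ l)"
  using burns_laplacian_phi[of _ N lam k l] phi_asymptotic[OF assms, of lam k l] phi_N_0[of lam k l]
    phi_eq_jacobiP[OF assms, of _ l k lam] phi_eq_jacobiP_less[OF assms, of _ k l lam] by blast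

end
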